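(* For any values of $k$, $\mu$, and $\nu$, \[ \,_{2}F_{3}\left(\tfrac{1}{2},\tfrac{\mu}{2}+\tfrac{\nu}{2}+\tfrac{1}{2};\mu+1,\nu+1,\mu+\nu+1;-k^{2}\right) =\frac{2^{\mu+\nu}\Gamma(\mu+1)\Gamma(\nu+1)\Gamma\left(\frac{\mu}{2}+\frac{\nu}{2}+1\right)}{\sqrt{\pi}\,\Gamma\left(\frac{\mu}{2}+\frac{\nu}{2}\right)^{2}\Gamma\left(\frac{\mu}{2}+\frac{\nu}{2}+\frac{1}{2}\right)} \sum_{L=0}^{\infty}\frac{(-1)^{2L}k^{4L}2^{4L-2\left(\frac{\mu}{2}+\frac{\nu}{2}\right)-\mu-\nu+1}\left(\left(\frac{\mu}{2}+\frac{\nu}{2}+\frac{1}{2}\right)_{2L}\right)^{2}\Gamma(2L+\mu+\nu)}{(2L)!\left(L+\frac{1}{2}\right)_{\mu+\frac{1}{2}}\left(L+\frac{1}{2}\right)_{\nu+\frac{1}{2}}\left(2L+\frac{\mu}{2}+\frac{\nu}{2}\right)\left((\mu+\nu)_{2L}\right)^{2}\left((2L+\mu+\nu)_{2L}\right)^{2}} \,_{1}F_{2}\left(L+\tfrac{1}{2};L+\mu+1,2L+\tfrac{\mu}{2}+\tfrac{\nu}{2}+1;-\tfrac{k^{2}}{4}\right)\,_{1}F_{2}\left(L+\tfrac{1}{2};2L+\tfrac{\mu}{2}+\tfrac{\nu}{2}+1,L+\nu+1;-\tfrac{k^{2}}{4}\right). \]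
   Context: $\,_{p}F_{q}(a_1,\dots,a_p;b_1,\dots,b_q;z)=\sum_{n\ge0}\frac{(a_1)_n\cdots(a_p)_n}{(b_1)_n\cdots(b_q)_n}\frac{z^n}{n!}$ is the generalized hypergeometric function. $(c)_g=\Gamma(c+g)/\Gamma(c)$ denotes the Pochhammer symbol (for arbitrary $g$). *)

theory Defs
  imports "HOL-Analysis.Analysis"
begin

definition hypergeomF :: "real list \<Rightarrow> real list \<Rightarrow> real \<Rightarrow> real" where
  "hypergeomF as bs z =
     (\<Sum>n. (\<Prod>a\<leftarrow>as. pochhammer a n) / (\<Prod>b\<leftarrow>bs. pochhammer b n) * z ^ n / fact n)"

definition gpoch :: "real \<Rightarrow> real \<Rightarrow> real" where
  "gpoch c g = Gamma (c + g) / Gamma c"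

end

theory Submission
  imports Defs "HOL-Computational_Algebra.Formal_Power_Series"
begin

text \<open>
  Write \<open>x = -k\<^sup>2\<close> and \<open>s = (\<mu> + \<nu>)/2\<close>. Multiplying out the two \<open>\<^sub>1F\<^sub>2\<close> series in
  each summand turns the right-hand side into a triple power series
  \<open>\<Sum> c(L,m,n) x\<^bsup>2L+m+n\<^esup>\<close>, which converges absolutely since \<open>c(L,m,n)\<close> is bounded
  by a geometric sequence divided by \<open>L! m! n!\<close>. Collecting instead the terms of equal degree
  \<open>N = 2L + m + n\<close> and writing \<open>i = L + m\<close>, \<open>j = L + n\<close>, the inner sum over \<open>L\<close> is a
  terminating very-well-poised sum, evaluated by a WZ certificate; the remaining sum over \<open>i\<close>
  is Chu-Vandermonde, and \<open>(2a)\<^sub>2\<^sub>N = 4\<^sup>N (a)\<^sub>N (a + 1/2)\<^sub>N\<close> turns the result into the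
  \<open>N\<close>-th coefficient of the \<open>\<^sub>2F\<^sub>3\<close> series. The Gamma factors of the statement reduce to
  Pochhammer symbols through \<open>\<Gamma>(c + n) = \<Gamma>(c) (c)\<^sub>n\<close> and Legendre's duplication formula.
\<close>

lemma notin_nonpos_Ints_add_of_nat:
  "(z::'a::ring_1) \<notin> \<int>\<^sub>\<le>\<^sub>0 \<Longrightarrow> z + of_nat n \<notin> \<int>\<^sub>\<le>\<^sub>0"
  using nonpos_Ints_diff_Nats[of "z + of_nat n" "of_nat n"] by auto

lemma pochhammer_neq_0: "(a::'a::field_char_0) \<notin> \<int>\<^sub>\<le>\<^sub>0 \<Longrightarrow> pochhammer a n \<noteq> 0"
  using pochhammer_eq_0_imp_nonpos_Int by blast

lemma half_notin_nonpos_Ints: "(1/2 :: real) \<notin> \<int>\<^sub>\<le>\<^sub>0"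
  by (auto elim!: nonpos_Ints_cases')

lemma notin_nonpos_Ints_of_double:
  fixes z :: "'a::field_char_0"
  assumes "2 * z \<notin> \<int>\<^sub>\<le>\<^sub>0"
  shows "z \<notin> \<int>\<^sub>\<le>\<^sub>0" and "z + 1/2 \<notin> \<int>\<^sub>\<le>\<^sub>0"
proof -
  show "z \<notin> \<int>\<^sub>\<le>\<^sub>0"
    using assms nonpos_Ints_add[of z z] by (simp only: mult_2) blast
  have "2 * z = (z + 1/2) + (z + 1/2) - 1"
    by (simp add: field_simps)
  then show "z + 1/2 \<notin> \<int>\<^sub>\<le>\<^sub>0"
    using assms nonpos_Ints_add[of "z + 1/2" "z + 1/2"] nonpos_Ints_diff_Nats[of _ 1] Nats_1
    by metis
qed

section \<open>Pochhammer symbols\<close>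

lemma pochhammer_minus_of_nat:
  assumes "L \<le> i"
  shows "pochhammer (- real i) L = (-1) ^ L * fact i / fact (i - L)"
proof -
  have "(fact i :: real) = fact (i - L) * pochhammer (real i - real L + 1) L"
    using pochhammer_product[of "i - L" i "1::real"] assms
    by (simp add: pochhammer_fact of_nat_diff add.commute)
  then show ?thesis
    by (simp add: pochhammer_minus)
qed

lemma pochhammer_minus_of_nat_mult:
  assumes "L \<le> i" "L \<le> j"
  shows "pochhammer (- real i) L * pochhammer (- real j) L = fact i * fact j / (fact (i - L) * fact (j - L))"
proof -
  have "((-1) ^ L * (-1) ^ L :: real) = 1"
    by (simp flip: power_add)
  then show ?thesis
    unfolding pochhammer_minus_of_nat[OF assms(1)] pochhammer_minus_of_nat[OF assms(2)]
    by (simp add: field_simps)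
qed

lemma pochhammer_double_shift:
  fixes z :: "'a::field_char_0"
  assumes "2 * z \<notin> \<int>\<^sub>\<le>\<^sub>0"
  shows "pochhammer (2 * z + of_nat n) n = 4 ^ n * pochhammer z n * pochhammer (z + 1/2) n / pochhammer (2 * z) n"
proof -
  have "pochhammer (2 * z) n * pochhammer (2 * z + of_nat n) n = pochhammer (2 * z) (2 * n)"
    using pochhammer_product'[of "2 * z" n n] by (simp only: mult_2[of n])
  also have "\<dots> = 4 ^ n * pochhammer z n * pochhammer (z + 1/2) n"
    by (simp add: pochhammer_double power_mult)
  finally show ?thesis
    using pochhammer_neq_0[OF assms, of n] by (simp add: eq_divide_eq mult.commute)
qed

lemma sum_inverse_pochhammer_Vandermonde:
  fixes a b :: real
  assumes a: "pochhammer a N \<noteq> 0" and b: "pochhammer b N \<noteq> 0"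
  shows "(\<Sum>i\<le>N. 1 / (fact i * fact (N - i) * pochhammer a i * pochhammer b (N - i)))
       = pochhammer (a + b + real N - 1) N / (fact N * pochhammer a N * pochhammer b N)"
proof -
  define X Y where "X = a + real N - 1" and "Y = b + real N - 1"
  have summand: "1 / (fact i * fact (N - i) * pochhammer a i * pochhammer b (N - i))
      = (Y gchoose i) * (X gchoose (N - i)) / (pochhammer a N * pochhammer b N)"
    if i: "i \<le> N" for i
  proof -
    have pa: "pochhammer a N = pochhammer a i * pochhammer (a + real i) (N - i)"
      using pochhammer_product[OF i, of a] by simp
    have pb: "pochhammer b N = pochhammer b (N - i) * pochhammer (b + real (N - i)) i"
      using pochhammer_product[of "N - i" N b] i by simp
    have "X gchoose (N - i) = pochhammer (a + real i) (N - i) / fact (N - i)"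
      unfolding gbinomial_pochhammer' X_def using i by (simp add: of_nat_diff algebra_simps)
    moreover have "Y gchoose i = pochhammer (b + real (N - i)) i / fact i"
      unfolding gbinomial_pochhammer' Y_def using i by (simp add: of_nat_diff algebra_simps)
    moreover have "pochhammer a i \<noteq> 0" "pochhammer (a + real i) (N - i) \<noteq> 0"
      "pochhammer b (N - i) \<noteq> 0" "pochhammer (b + real (N - i)) i \<noteq> 0"
      using a b unfolding pa pb by auto
    ultimately show ?thesis
      unfolding pa pb by (simp add: field_simps)
  qed
  have "(\<Sum>i\<le>N. 1 / (fact i * fact (N - i) * pochhammer a i * pochhammer b (N - i)))
      = (\<Sum>i\<le>N. (Y gchoose i) * (X gchoose (N - i))) / (pochhammer a N * pochhammer b N)"
    by (simp add: summand sum_divide_distrib)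
  also have "(\<Sum>i\<le>N. (Y gchoose i) * (X gchoose (N - i))) = (Y + X) gchoose N"
    using gbinomial_Vandermonde[of Y X N] by (simp add: atMost_atLeast0)
  also have "(Y + X) gchoose N = pochhammer (a + b + real N - 1) N / fact N"
    unfolding gbinomial_pochhammer' X_def Y_def by (simp add: algebra_simps)
  finally show ?thesis
    by simp
qed

lemma abs_pochhammer_le: "\<bar>pochhammer (a::real) n\<bar> \<le> (\<bar>a\<bar> + 1) ^ n * fact n"
proof (induction n)
  case 0
  then show ?case by simp
next
  case (Suc n)
  have "\<bar>pochhammer a (Suc n)\<bar> = \<bar>a + real n\<bar> * \<bar>pochhammer a n\<bar>"
    by (simp add: pochhammer_rec' abs_mult)
  also have "\<dots> \<le> ((\<bar>a\<bar> + 1) * (real n + 1)) * ((\<bar>a\<bar> + 1) ^ n * fact n)"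
  proof (rule mult_mono[OF _ Suc.IH])
    have "(\<bar>a\<bar> + 1) * (real n + 1) = \<bar>a\<bar> + real n + (\<bar>a\<bar> * real n + 1)"
      by (simp add: algebra_simps)
    moreover have "0 \<le> \<bar>a\<bar> * real n"
      by simp
    ultimately show "\<bar>a + real n\<bar> \<le> (\<bar>a\<bar> + 1) * (real n + 1)"
      using abs_triangle_ineq[of a "real n"] by linarith
  qed auto
  also have "\<dots> = (\<bar>a\<bar> + 1) ^ Suc n * fact (Suc n)"
    by (simp add: algebra_simps)
  finally show ?case .
qed

lemma pochhammer_lower_bound:
  fixes a :: real
  assumes a: "a \<notin> \<int>\<^sub>\<le>\<^sub>0"
  obtains C where "C > 0" "\<And>n. C * fact n / 2 ^ n \<le> \<bar>pochhammer a n\<bar>"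
proof -
  define K where "K = nat \<lceil>2 * \<bar>a\<bar>\<rceil> + 1"
  \<comment> \<open>beyond \<open>K\<close> every new factor \<open>a + n\<close> is at least \<open>(n + 1)/2\<close>\<close>
  define C where "C = Min ((\<lambda>n. \<bar>pochhammer a n\<bar> * 2 ^ n / fact n) ` {..K})"
  have "C > 0"
    unfolding C_def using pochhammer_neq_0[OF a] by (subst Min_gr_iff) auto
  have "C * fact n / 2 ^ n \<le> \<bar>pochhammer a n\<bar>" for n
  proof (induction n)
    case 0
    have "C \<le> 1"
      unfolding C_def by (rule Min_le) force+
    then show ?case by simp
  next
    case (Suc n)
    show ?case
    proof (cases "Suc n \<le> K")
      case True
      then have "C \<le> \<bar>pochhammer a (Suc n)\<bar> * 2 ^ Suc n / fact (Suc n)"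
        unfolding C_def by (intro Min_le) (auto intro: rev_image_eqI)
      then show ?thesis
        by (simp add: field_simps del: fact_Suc power_Suc)
    next
      case False
      then have "2 * \<bar>a\<bar> + 1 \<le> real n"
        unfolding K_def by linarith
      then have "(real n + 1) / 2 \<le> a + real n"
        using abs_ge_minus_self[of a] by (simp add: field_simps)
      then have "(real n + 1) / 2 \<le> \<bar>a + real n\<bar>"
        by linarith
      have "C * fact (Suc n) / 2 ^ Suc n = (real n + 1) / 2 * (C * fact n / 2 ^ n)"
        by (simp add: field_simps)
      also have "\<dots> \<le> \<bar>a + real n\<bar> * \<bar>pochhammer a n\<bar>"
        by (rule mult_mono[OF \<open>(real n + 1) / 2 \<le> \<bar>a + real n\<bar>\<close> Suc.IH]) (use \<open>C > 0\<close> in auto)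
      also have "\<dots> = \<bar>pochhammer a (Suc n)\<bar>"
        by (simp add: pochhammer_rec' abs_mult)
      finally show ?thesis .
    qed
  qed
  with \<open>C > 0\<close> show ?thesis
    using that by blast
qed

lemma abs_pochhammer_ratio_bound:
  fixes a b :: real
  assumes "b \<notin> \<int>\<^sub>\<le>\<^sub>0"
  obtains C where "C > 0" "\<And>n. \<bar>pochhammer a n / pochhammer b n\<bar> \<le> (2 * (\<bar>a\<bar> + 1)) ^ n / C"
proof -
  obtain C where C: "C > 0" "\<And>n. C * fact n / 2 ^ n \<le> \<bar>pochhammer b n\<bar>"
    using pochhammer_lower_bound[OF assms] by blast
  have "\<bar>pochhammer a n / pochhammer b n\<bar> \<le> (\<bar>a\<bar> + 1) ^ n * fact n / (C * fact n / 2 ^ n)" for n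
    unfolding abs_divide using C by (intro frac_le abs_pochhammer_le) auto
  also have "(\<bar>a\<bar> + 1) ^ n * fact n / (C * fact n / 2 ^ n) = (2 * (\<bar>a\<bar> + 1)) ^ n / C" for n
    using C unfolding power_mult_distrib by (simp add: field_simps)
  finally show ?thesis
    using that C(1) by blast
qed

lemma abs_inverse_pochhammer_bound:
  fixes b :: real
  assumes "b \<notin> \<int>\<^sub>\<le>\<^sub>0"
  obtains C where "C > 0" "\<And>k l. \<bar>1 / pochhammer b (k + l)\<bar> \<le> 2 ^ (k + l) / (C * fact k)"
proof -
  obtain C where C: "C > 0" "\<And>n. C * fact n / 2 ^ n \<le> \<bar>pochhammer b n\<bar>"
    using pochhammer_lower_bound[OF assms] by blast
  have "\<bar>1 / pochhammer b (k + l)\<bar> \<le> 1 / (C * fact k / 2 ^ (k + l))" for k l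
  proof -
    have "C * fact k / 2 ^ (k + l) \<le> C * fact (k + l) / 2 ^ (k + l)"
      using C(1) by (intro divide_right_mono mult_left_mono fact_mono) auto
    also have "\<dots> \<le> \<bar>pochhammer b (k + l)\<bar>"
      by (rule C(2))
    finally show ?thesis
      unfolding abs_divide using C(1) by (intro frac_le) auto
  qed
  then show ?thesis
    using that C(1) by simp
qed

lemma abs_prod_pochhammer_le:
  "\<bar>\<Prod>a\<leftarrow>as. pochhammer (a::real) n\<bar> \<le> (\<Prod>a\<leftarrow>as. \<bar>a\<bar> + 1) ^ n * fact n ^ length as"
proof (induction as)
  case Nil
  then show ?case by simp
next
  case (Cons a as)
  have "\<bar>\<Prod>a\<leftarrow>a # as. pochhammer a n\<bar> = \<bar>pochhammer a n\<bar> * \<bar>\<Prod>a\<leftarrow>as. pochhammer a n\<bar>"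
    by (simp add: abs_mult)
  also have "\<dots> \<le> ((\<bar>a\<bar> + 1) ^ n * fact n) * ((\<Prod>a\<leftarrow>as. \<bar>a\<bar> + 1) ^ n * fact n ^ length as)"
    by (intro mult_mono abs_pochhammer_le Cons.IH) auto
  also have "\<dots> = (\<Prod>a\<leftarrow>a # as. \<bar>a\<bar> + 1) ^ n * fact n ^ length (a # as)"
    by (simp add: power_mult_distrib)
  finally show ?case .
qed

lemma prod_pochhammer_lower_bound:
  fixes bs :: "real list"
  assumes "\<And>b. b \<in> set bs \<Longrightarrow> b \<notin> \<int>\<^sub>\<le>\<^sub>0"
  obtains C where "C > 0" "\<And>n. C * (fact n / 2 ^ n) ^ length bs \<le> \<bar>\<Prod>b\<leftarrow>bs. pochhammer b n\<bar>"
  using assms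
proof (induction bs arbitrary: thesis)
  case Nil
  show ?case
    by (rule Nil.prems(1)[of 1]) simp_all
next
  case (Cons b bs)
  obtain C where C: "C > 0" "\<And>n. C * (fact n / 2 ^ n) ^ length bs \<le> \<bar>\<Prod>b\<leftarrow>bs. pochhammer b n\<bar>"
    using Cons.IH Cons.prems(2) by auto
  obtain D where D: "D > 0" "\<And>n. D * fact n / 2 ^ n \<le> \<bar>pochhammer b n\<bar>"
    using pochhammer_lower_bound Cons.prems(2) by (metis list.set_intros(1))
  show ?case
  proof (rule Cons.prems(1)[of "D * C"])
    fix n
    have "D * C * (fact n / 2 ^ n) ^ length (b # bs) = (D * fact n / 2 ^ n) * (C * (fact n / 2 ^ n) ^ length bs)"
      by simp
    also have "\<dots> \<le> \<bar>pochhammer b n\<bar> * \<bar>\<Prod>b\<leftarrow>bs. pochhammer b n\<bar>"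
      using C D by (intro mult_mono) auto
    finally show "D * C * (fact n / 2 ^ n) ^ length (b # bs) \<le> \<bar>\<Prod>b\<leftarrow>b # bs. pochhammer b n\<bar>"
      by (simp add: abs_mult)
  qed (use C D in simp)
qed

section \<open>Convergence of hypergeometric series\<close>

definition hypergeom_term :: "real list \<Rightarrow> real list \<Rightarrow> real \<Rightarrow> nat \<Rightarrow> real" where
  "hypergeom_term as bs z n = (\<Prod>a\<leftarrow>as. pochhammer a n) / (\<Prod>b\<leftarrow>bs. pochhammer b n) * z ^ n / fact n"

lemma hypergeomF_eq_suminf: "hypergeomF as bs z = (\<Sum>n. hypergeom_term as bs z n)"
  by (simp add: hypergeomF_def hypergeom_term_def)

lemma abs_hypergeom_term_bound:
  assumes "length as \<le> length bs" and "\<And>b. b \<in> set bs \<Longrightarrow> b \<notin> \<int>\<^sub>\<le>\<^sub>0"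
  obtains C w where "C > 0" "\<And>n. \<bar>hypergeom_term as bs z n\<bar> \<le> w ^ n / (C * fact n)"
proof -
  define M where "M = (\<Prod>a\<leftarrow>as. \<bar>a\<bar> + 1)"
  have "M \<ge> 0"
    unfolding M_def by (induction as) auto
  obtain C where C: "C > 0" "\<And>n. C * (fact n / 2 ^ n) ^ length bs \<le> \<bar>\<Prod>b\<leftarrow>bs. pochhammer b n\<bar>"
    using prod_pochhammer_lower_bound[OF assms(2)] by blast
  define w where "w = M * 2 ^ length bs * \<bar>z\<bar>"
  have bound: "\<bar>hypergeom_term as bs z n\<bar> \<le> w ^ n / (C * fact n)" for n
  proof -
    have "fact n ^ length as \<le> (fact n ^ length bs :: real)"
      by (rule power_increasing[OF assms(1)]) simp
    then have "M ^ n * fact n ^ length as * \<bar>z\<bar> ^ n \<le> M ^ n * fact n ^ length bs * \<bar>z\<bar> ^ n"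
      using \<open>M \<ge> 0\<close> by (intro mult_right_mono mult_left_mono) auto
    have "\<bar>hypergeom_term as bs z n\<bar>
        = \<bar>\<Prod>a\<leftarrow>as. pochhammer a n\<bar> * \<bar>z\<bar> ^ n / (\<bar>\<Prod>b\<leftarrow>bs. pochhammer b n\<bar> * fact n)"
      by (simp add: hypergeom_term_def abs_mult abs_divide power_abs)
    also have "\<dots> \<le> M ^ n * fact n ^ length as * \<bar>z\<bar> ^ n / (C * (fact n / 2 ^ n) ^ length bs * fact n)"
    proof (rule frac_le)
      show "\<bar>\<Prod>a\<leftarrow>as. pochhammer a n\<bar> * \<bar>z\<bar> ^ n \<le> M ^ n * fact n ^ length as * \<bar>z\<bar> ^ n"
        unfolding M_def by (rule mult_right_mono[OF abs_prod_pochhammer_le]) simp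
      show "C * (fact n / 2 ^ n) ^ length bs * fact n \<le> \<bar>\<Prod>b\<leftarrow>bs. pochhammer b n\<bar> * fact n"
        by (rule mult_right_mono[OF C(2)]) simp
    qed (use C \<open>M \<ge> 0\<close> in simp_all)
    also have "\<dots> \<le> M ^ n * fact n ^ length bs * \<bar>z\<bar> ^ n / (C * (fact n / 2 ^ n) ^ length bs * fact n)"
      using C by (intro divide_right_mono \<open>M ^ n * fact n ^ length as * \<bar>z\<bar> ^ n \<le> _\<close>) simp
    also have "\<dots> = w ^ n / (C * fact n)"
    proof -
      have "(fact n / 2 ^ n) ^ length bs = (fact n ^ length bs / (2 ^ length bs) ^ n :: real)"
        by (simp add: power_divide flip: power_mult)
      moreover have "w ^ n = M ^ n * (2 ^ length bs) ^ n * \<bar>z\<bar> ^ n"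
        by (simp add: w_def power_mult_distrib)
      ultimately show ?thesis
        using C by (simp add: field_simps)
    qed
    finally show ?thesis .
  qed
  from C(1) bound show ?thesis
    by (rule that)
qed

lemma hypergeomF_has_sum:
  assumes "length as \<le> length bs" and "\<And>b. b \<in> set bs \<Longrightarrow> b \<notin> \<int>\<^sub>\<le>\<^sub>0"
  shows "(hypergeom_term as bs z has_sum hypergeomF as bs z) UNIV"
proof -
  obtain C w where C: "C > 0" and bound: "\<And>n. \<bar>hypergeom_term as bs z n\<bar> \<le> w ^ n / (C * fact n)"
    using abs_hypergeom_term_bound[OF assms] by blast
  have "summable (\<lambda>n. w ^ n / fact n / C)"
    using summable_exp[of w] by (intro summable_divide) (simp add: divide_inverse mult.commute)
  then have norm_summable: "summable (\<lambda>n. norm (hypergeom_term as bs z n))"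
    by (rule summable_comparison_test') (use bound in \<open>simp add: field_simps\<close>)
  then have "hypergeom_term as bs z sums hypergeomF as bs z"
    unfolding hypergeomF_eq_suminf by (intro summable_sums summable_norm_cancel[OF norm_summable])
  then show ?thesis
    by (rule norm_summable_imp_has_sum[OF norm_summable])
qed

section \<open>Products and regrouping of absolutely convergent series\<close>

lemma has_sum_exp_series: "((\<lambda>k. c ^ k / fact k) has_sum exp c) UNIV" for c :: real
proof -
  have "summable (\<lambda>k. norm (c ^ k / fact k))"
    using summable_exp[of "\<bar>c\<bar>"] by (simp add: abs_mult power_abs divide_inverse mult.commute)
  moreover have "(\<lambda>k. c ^ k / fact k) sums exp c"
    using exp_converges[of c] by (simp add: divide_inverse mult.commute)
  ultimately show ?thesis
    by (rule norm_summable_imp_has_sum)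
qed

lemma has_sum_mult_product:
  fixes u :: "'a \<Rightarrow> real" and v :: "'b \<Rightarrow> real"
  assumes u: "(u has_sum U) A" and v: "(v has_sum V) B"
  shows "((\<lambda>(a, b). u a * v b) has_sum U * V) (A \<times> B)"
proof -
  have abs_u: "(\<lambda>a. \<bar>u a\<bar>) summable_on A"
    using summable_on_iff_abs_summable_on_real[THEN iffD1, OF has_sum_imp_summable[OF u]] by simp
  have abs_v: "(\<lambda>b. \<bar>v b\<bar>) summable_on B"
    using summable_on_iff_abs_summable_on_real[THEN iffD1, OF has_sum_imp_summable[OF v]] by simp
  have "((\<lambda>b. \<bar>u a * v b\<bar>) has_sum \<bar>u a\<bar> * infsum (\<lambda>b. \<bar>v b\<bar>) B) B" for a
    using has_sum_cmult_right[OF has_sum_infsum[OF abs_v], of "\<bar>u a\<bar>"] by (simp add: abs_mult)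
  then have "(\<lambda>(a, b). \<bar>u a * v b\<bar>) summable_on A \<times> B"
    by (intro summable_on_SigmaI[where g = "\<lambda>a. \<bar>u a\<bar> * infsum (\<lambda>b. \<bar>v b\<bar>) B"])
       (auto intro: summable_on_cmult_left[OF abs_u])
  then have "(\<lambda>p. norm ((\<lambda>(a, b). u a * v b) p)) summable_on A \<times> B"
    by (simp add: case_prod_unfold)
  then have summable: "(\<lambda>(a, b). u a * v b) summable_on A \<times> B"
    by (rule abs_summable_summable)
  have inner: "((\<lambda>b. u a * v b) has_sum u a * V) B" for a
    using v by (rule has_sum_cmult_right)
  have outer: "((\<lambda>a. u a * V) has_sum U * V) A"
    using u by (rule has_sum_cmult_left)
  show ?thesis
    by (rule has_sum_SigmaI[OF _ outer summable]) (simp add: inner)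
qed

lemma sums_regroup_by_degree:
  fixes g :: "nat \<times> nat \<times> nat \<Rightarrow> real"
  assumes g: "g summable_on UNIV" and r: "\<And>L. ((\<lambda>q. g (L, q)) has_sum r L) UNIV"
  shows "r sums infsum g UNIV"
    and "(\<lambda>N. \<Sum>p\<in>{(L, m, n). 2 * L + m + n = N}. g p) sums infsum g UNIV"
proof -
  have "(g has_sum infsum g UNIV) (Sigma UNIV (\<lambda>_. UNIV))"
    using g by simp
  then show "r sums infsum g UNIV"
    using r by (intro has_sum_imp_sums) (rule has_sum_SigmaD)
  define fiber where "fiber N = {(L, m, n). 2 * L + m + n = N}" for N :: nat
  have "finite (fiber N)" for N
    by (rule finite_subset[of _ "{..N} \<times> {..N} \<times> {..N}"]) (auto simp: fiber_def)
  have "(g has_sum infsum g UNIV) UNIV"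
    using g by simp
  also have "?this \<longleftrightarrow> ((\<lambda>q. g (snd q)) has_sum infsum g UNIV) (Sigma UNIV fiber)"
    by (rule has_sum_reindex_bij_witness[where j = "\<lambda>(L, m, n). (2 * L + m + n, (L, m, n))" and i = snd])
       (auto simp: fiber_def)
  finally have "((\<lambda>N. sum g (fiber N)) has_sum infsum g UNIV) UNIV"
    by (rule has_sum_SigmaD) (simp add: \<open>finite (fiber _)\<close>)
  then show "(\<lambda>N. \<Sum>p\<in>{(L, m, n). 2 * L + m + n = N}. g p) sums infsum g UNIV"
    unfolding fiber_def by (rule has_sum_imp_sums)
qed

section \<open>A terminating very-well-poised sum\<close>

definition wp_term :: "real \<Rightarrow> nat \<Rightarrow> nat \<Rightarrow> nat \<Rightarrow> real" where
  "wp_term s i j L =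
     pochhammer (2 * s) (2 * L) * (2 * real L + s) * pochhammer (- real i) L * pochhammer (- real j) L
     / (s * fact (2 * L) * pochhammer (s + 1) (L + i) * pochhammer (s + 1) (L + j))"

definition wp_factor :: "real \<Rightarrow> nat \<Rightarrow> nat \<Rightarrow> nat \<Rightarrow> real" where
  "wp_factor s i j L =
     pochhammer (2 * s) (2 * L) * pochhammer (- real i) L * pochhammer (- real j - 1) L
     / (s * fact (2 * L) * pochhammer (s + 1) (L + i) * pochhammer (s + 1) (L + j))"

definition wp_cert :: "real \<Rightarrow> nat \<Rightarrow> nat \<Rightarrow> nat \<Rightarrow> real" where
  "wp_cert s i j L = wp_factor s i j L
     * (- (real L * (2 * real L - 1) * (real L + real i + s))
        / ((2 * real j + 1) * (real j + 1) * (s + 1 + real i + real j)))"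

text \<open>
  The sum of \<^const>\<open>wp_term\<close> over \<open>L \<le> i\<close> is evaluated by induction on \<open>j\<close>:
  \<^const>\<open>wp_cert\<close> is the certificate produced by Gosper's algorithm (the WZ method), and
  \<open>wp_term_telescope\<close> is the recurrence it certifies.
\<close>

lemma wp_term_eq_wp_factor:
  assumes s: "s \<notin> \<int>\<^sub>\<le>\<^sub>0"
  shows "wp_term s i j L = wp_factor s i j L * ((2 * real L + s) * (real j + 1 - real L) / (real j + 1))"
    and "wp_term s i (Suc j) L = wp_factor s i j L * ((2 * real L + s) / (s + 1 + real L + real j))"
proof -
  have "s \<noteq> 0" "s + 1 + real L + real j \<noteq> 0"
    using s plus_of_nat_eq_0_imp[of s 0] plus_of_nat_eq_0_imp[of s "1 + L + j"] by (auto simp: add.assoc)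
  have nz: "pochhammer (s + 1) (L + i) \<noteq> 0" "pochhammer (s + 1) (L + j) \<noteq> 0"
    using pochhammer_neq_0[OF notin_nonpos_Ints_add_of_nat[OF s, of 1]] by auto
  have "pochhammer (- real j) L * (real j + 1) = pochhammer (- real j - 1) L * (real j + 1 - real L)"
    using pochhammer_rec[of "- real j - 1" L] pochhammer_rec'[of "- real j - 1" L] by (simp add: algebra_simps)
  then have minus_j: "pochhammer (- real j) L = pochhammer (- real j - 1) L * (real j + 1 - real L) / (real j + 1)"
    by (simp add: field_simps)
  show "wp_term s i j L = wp_factor s i j L * ((2 * real L + s) * (real j + 1 - real L) / (real j + 1))"
    unfolding wp_term_def wp_factor_def minus_j using nz \<open>s \<noteq> 0\<close> by (simp add: field_simps)
  have "- real (Suc j) = - real j - 1"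
    by simp
  then have minus_Suc_j: "pochhammer (- real (Suc j)) L = pochhammer (- real j - 1) L"
    by (simp only:)
  have Suc_j: "pochhammer (s + 1) (L + Suc j) = pochhammer (s + 1) (L + j) * (s + 1 + real L + real j)"
    by (simp add: pochhammer_rec' algebra_simps)
  show "wp_term s i (Suc j) L = wp_factor s i j L * ((2 * real L + s) / (s + 1 + real L + real j))"
    unfolding wp_term_def wp_factor_def minus_Suc_j Suc_j
    using nz \<open>s \<noteq> 0\<close> \<open>s + 1 + real L + real j \<noteq> 0\<close> by (simp add: field_simps)
qed

lemma wp_factor_Suc:
  "wp_factor s i j (Suc L) = wp_factor s i j L
     * ((2 * s + 2 * real L) * (2 * s + 2 * real L + 1) * (real L - real i) * (real L - real j - 1)
       / ((2 * real L + 1) * (2 * real L + 2) * (s + 1 + real L + real i) * (s + 1 + real L + real j)))"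
proof -
  have "pochhammer (2 * s) (2 * Suc L) = pochhammer (2 * s) (2 * L) * (2 * s + 2 * real L) * (2 * s + 2 * real L + 1)"
    "pochhammer (- real i) (Suc L) = pochhammer (- real i) L * (real L - real i)"
    "pochhammer (- real j - 1) (Suc L) = pochhammer (- real j - 1) L * (real L - real j - 1)"
    "(fact (2 * Suc L) :: real) = fact (2 * L) * (2 * real L + 1) * (2 * real L + 2)"
    "pochhammer (s + 1) (Suc L + i) = pochhammer (s + 1) (L + i) * (s + 1 + real L + real i)"
    "pochhammer (s + 1) (Suc L + j) = pochhammer (s + 1) (L + j) * (s + 1 + real L + real j)"
    by (simp_all add: pochhammer_rec' algebra_simps)
  then show ?thesis
    unfolding wp_factor_def by (simp only:) (simp add: times_divide_times_eq mult_ac)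
qed

lemma wp_term_telescope:
  assumes s: "s \<notin> \<int>\<^sub>\<le>\<^sub>0"
  shows "wp_term s i (Suc j) L
         - (2 * real i + 2 * real j + 1) / ((s + 1 + real i + real j) * (2 * real j + 1)) * wp_term s i j L
       = wp_cert s i j (Suc L) - wp_cert s i j L"
proof -
  have ne: "s + 1 + real a + real b \<noteq> 0" for a b
    using s plus_of_nat_eq_0_imp[of s "1 + a + b"] by (auto simp: add.assoc)
  have "(2 * s + 2 * real L) * (2 * s + 2 * real L + 1) * (real L - real i) * (real L - real j - 1)
       / ((2 * real L + 1) * (2 * real L + 2) * (s + 1 + real L + real i) * (s + 1 + real L + real j))
     * (- (real (Suc L) * (2 * real (Suc L) - 1) * (real (Suc L) + real i + s))
        / ((2 * real j + 1) * (real j + 1) * (s + 1 + real i + real j)))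
    = - ((s + real L) * (2 * s + 2 * real L + 1) * (real L - real i) * (real L - real j - 1))
      / ((2 * real j + 1) * (real j + 1) * (s + 1 + real i + real j) * (s + 1 + real L + real j))"
    using ne by (simp add: divide_simps) (simp add: algebra_simps)
  then have cert_Suc: "wp_cert s i j (Suc L) = wp_factor s i j L
      * (- ((s + real L) * (2 * s + 2 * real L + 1) * (real L - real i) * (real L - real j - 1))
      / ((2 * real j + 1) * (real j + 1) * (s + 1 + real i + real j) * (s + 1 + real L + real j)))"
    unfolding wp_cert_def wp_factor_Suc[of s i j L] by (simp only: mult.assoc)
  have rational: "(2 * real L + s) / (s + 1 + real L + real j)
      - (2 * real i + 2 * real j + 1) / ((s + 1 + real i + real j) * (2 * real j + 1))
        * ((2 * real L + s) * (real j + 1 - real L) / (real j + 1))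
    = - ((s + real L) * (2 * s + 2 * real L + 1) * (real L - real i) * (real L - real j - 1))
        / ((2 * real j + 1) * (real j + 1) * (s + 1 + real i + real j) * (s + 1 + real L + real j))
      - - (real L * (2 * real L - 1) * (real L + real i + s))
        / ((2 * real j + 1) * (real j + 1) * (s + 1 + real i + real j))"
    using ne by (simp add: divide_simps) (simp add: algebra_simps)
  have factor_out: "c * a - r * (c * b) = c * (a - r * b)" for c a r b :: real
    by (simp add: algebra_simps)
  show ?thesis
    unfolding wp_term_eq_wp_factor[OF s, of i j L] cert_Suc wp_cert_def[of s i j L] factor_out rational
    by (simp only: right_diff_distrib)
qed

lemma sum_wp_term:
  assumes s: "s \<notin> \<int>\<^sub>\<le>\<^sub>0"
  shows "(\<Sum>L\<le>i. wp_term s i j L)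
       = pochhammer (1/2) (i + j) / (pochhammer (s + 1) (i + j) * pochhammer (1/2) i * pochhammer (1/2) j)"
proof (induction j)
  case 0
  have "s \<noteq> 0"
    using s by auto
  then have "wp_term s i 0 L = (if L = 0 then 1 / pochhammer (s + 1) i else 0)" for L
    by (auto simp: wp_term_def pochhammer_0_left)
  then show ?case
    using pochhammer_neq_0[OF half_notin_nonpos_Ints, of i] by simp
next
  case (Suc j)
  define r where "r = (2 * real i + 2 * real j + 1) / ((s + 1 + real i + real j) * (2 * real j + 1))"
  have "s + 1 + real i + real j \<noteq> 0"
    using s plus_of_nat_eq_0_imp[of s "1 + i + j"] by (auto simp: add.assoc)
  then have ratio: "r * (pochhammer (1/2) (i + j) / (pochhammer (s + 1) (i + j) * pochhammer (1/2) i * pochhammer (1/2) j))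
      = pochhammer (1/2) (i + Suc j) / (pochhammer (s + 1) (i + Suc j) * pochhammer (1/2) i * pochhammer (1/2) (Suc j))"
    using pochhammer_neq_0[OF half_notin_nonpos_Ints] pochhammer_neq_0[OF notin_nonpos_Ints_add_of_nat[OF s, of 1]]
    by (simp add: r_def pochhammer_rec' divide_simps) (simp add: algebra_simps)
  have "(\<Sum>L\<le>i. wp_term s i (Suc j) L)
      = (\<Sum>L\<le>i. r * wp_term s i j L + (wp_cert s i j (Suc L) - wp_cert s i j L))"
  proof (rule sum.cong[OF refl])
    fix L
    show "wp_term s i (Suc j) L = r * wp_term s i j L + (wp_cert s i j (Suc L) - wp_cert s i j L)"
      using wp_term_telescope[OF s, of i j L] unfolding r_def by linarith
  qed
  also have "\<dots> = r * (\<Sum>L\<le>i. wp_term s i j L) + (wp_cert s i j (Suc i) - wp_cert s i j 0)"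
    by (simp only: sum.distrib sum_distrib_left lessThan_Suc_atMost[symmetric] sum_lessThan_telescope)
  also have "wp_cert s i j (Suc i) = 0"
    by (simp add: wp_cert_def wp_factor_def pochhammer_of_nat_eq_0_iff)
  also have "wp_cert s i j 0 = 0"
    by (simp add: wp_cert_def)
  finally show ?case
    using Suc.IH ratio by simp
qed

section \<open>The triple series\<close>

text \<open>
  The coefficient of \<open>x\<^bsup>2L+m+n\<^esup>\<close> when the right-hand side is multiplied out;
  \<open>s\<close> stands for \<open>(\<mu> + \<nu>)/2\<close>.
\<close>

definition triple_coeff :: "real \<Rightarrow> real \<Rightarrow> real \<Rightarrow> nat \<Rightarrow> nat \<Rightarrow> nat \<Rightarrow> real" where
  "triple_coeff s \<mu> \<nu> L m n =
     pochhammer (2 * s) (2 * L) / fact (2 * L) * ((2 * real L + s) / s)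
     * (pochhammer (1/2) (L + m) / pochhammer (\<mu> + 1) (L + m))
     * (pochhammer (1/2) (L + n) / pochhammer (\<nu> + 1) (L + n))
     / (pochhammer (s + 1) (2 * L + m) * pochhammer (s + 1) (2 * L + n)
        * 4 ^ (2 * L + m + n) * fact m * fact n)"

lemma triple_coeff_diagonal:
  assumes "L \<le> i" "L \<le> j" and s: "s \<notin> \<int>\<^sub>\<le>\<^sub>0"
    and \<mu>: "\<mu> + 1 \<notin> \<int>\<^sub>\<le>\<^sub>0" and \<nu>: "\<nu> + 1 \<notin> \<int>\<^sub>\<le>\<^sub>0"
  shows "triple_coeff s \<mu> \<nu> L (i - L) (j - L)
       = pochhammer (1/2) i * pochhammer (1/2) j
         / (4 ^ (i + j) * pochhammer (\<mu> + 1) i * pochhammer (\<nu> + 1) j * fact i * fact j)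
         * wp_term s i j L"
proof -
  have "L + (i - L) = i" "L + (j - L) = j" "2 * L + (i - L) = L + i" "2 * L + (j - L) = L + j"
     "2 * L + (i - L) + (j - L) = i + j"
    using assms by auto
  moreover have wp: "wp_term s i j L = pochhammer (2 * s) (2 * L) * (2 * real L + s)
      * (pochhammer (- real i) L * pochhammer (- real j) L)
      / (s * fact (2 * L) * pochhammer (s + 1) (L + i) * pochhammer (s + 1) (L + j))"
    unfolding wp_term_def by (simp only: mult.assoc)
  moreover have "s \<noteq> 0" "pochhammer (s + 1) (L + i) \<noteq> 0" "pochhammer (s + 1) (L + j) \<noteq> 0"
    "pochhammer (\<mu> + 1) i \<noteq> 0" "pochhammer (\<nu> + 1) j \<noteq> 0"
    using s \<mu> \<nu> pochhammer_neq_0 notin_nonpos_Ints_add_of_nat[OF s, of 1] by auto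
  ultimately show ?thesis
    unfolding triple_coeff_def wp pochhammer_minus_of_nat_mult[OF assms(1,2)] by (simp add: field_simps)
qed

lemma sum_triple_coeff_diagonal:
  assumes s: "s \<notin> \<int>\<^sub>\<le>\<^sub>0" and \<mu>: "\<mu> + 1 \<notin> \<int>\<^sub>\<le>\<^sub>0" and \<nu>: "\<nu> + 1 \<notin> \<int>\<^sub>\<le>\<^sub>0"
  shows "(\<Sum>L\<le>min i j. triple_coeff s \<mu> \<nu> L (i - L) (j - L))
       = pochhammer (1/2) (i + j) / (4 ^ (i + j) * pochhammer (s + 1) (i + j)
           * fact i * fact j * pochhammer (\<mu> + 1) i * pochhammer (\<nu> + 1) j)"
proof -
  define c where "c = pochhammer (1/2) i * pochhammer (1/2) j
    / (4 ^ (i + j) * pochhammer (\<mu> + 1) i * pochhammer (\<nu> + 1) j * fact i * fact j)"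
  have "(\<Sum>L\<le>min i j. triple_coeff s \<mu> \<nu> L (i - L) (j - L)) = (\<Sum>L\<le>min i j. c * wp_term s i j L)"
    by (rule sum.cong) (simp_all add: c_def triple_coeff_diagonal[OF _ _ s \<mu> \<nu>])
  also have "\<dots> = (\<Sum>L\<le>i. c * wp_term s i j L)"
    by (rule sum.mono_neutral_left)
       (auto simp: wp_term_def pochhammer_of_nat_eq_0_iff)
  also have "\<dots> = c * (pochhammer (1/2) (i + j)
      / (pochhammer (s + 1) (i + j) * pochhammer (1/2) i * pochhammer (1/2) j))"
    by (simp add: sum_wp_term[OF s] flip: sum_distrib_left)
  also have "\<dots> = pochhammer (1/2) (i + j) / (4 ^ (i + j) * pochhammer (s + 1) (i + j)
           * fact i * fact j * pochhammer (\<mu> + 1) i * pochhammer (\<nu> + 1) j)"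
    using pochhammer_neq_0[OF half_notin_nonpos_Ints] pochhammer_neq_0 \<mu> \<nu>
    by (simp add: c_def field_simps)
  finally show ?thesis .
qed

lemma sum_degree_fiber:
  fixes f :: "nat \<times> nat \<times> nat \<Rightarrow> 'a::comm_monoid_add"
  shows "(\<Sum>p\<in>{(L, m, n). 2 * L + m + n = N}. f p)
       = (\<Sum>i\<le>N. \<Sum>L\<le>min i (N - i). f (L, i - L, N - i - L))"
proof -
  have "(\<Sum>p\<in>{(L, m, n). 2 * L + m + n = N}. f p)
      = (\<Sum>(i, L)\<in>(SIGMA i:{..N}. {..min i (N - i)}). f (L, i - L, N - i - L))"
    by (rule sum.reindex_bij_witness[where j = "\<lambda>(L, m, n). (L + m, L)"
          and i = "\<lambda>(i, L). (L, i - L, N - i - L)"]) auto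
  also have "\<dots> = (\<Sum>i\<le>N. \<Sum>L\<le>min i (N - i). f (L, i - L, N - i - L))"
    by (rule sum.Sigma[symmetric]) auto
  finally show ?thesis .
qed

lemma sum_triple_coeff_fiber:
  assumes \<mu>: "\<mu> + 1 \<notin> \<int>\<^sub>\<le>\<^sub>0" and \<nu>: "\<nu> + 1 \<notin> \<int>\<^sub>\<le>\<^sub>0" and \<mu>\<nu>: "\<mu> + \<nu> \<notin> \<int>\<^sub>\<le>\<^sub>0"
    and two_s: "\<mu> + \<nu> = 2 * s"
  shows "(\<Sum>(L, m, n)\<in>{(L, m, n). 2 * L + m + n = N}. triple_coeff s \<mu> \<nu> L m n)
       = pochhammer (1/2) N * pochhammer (s + 1/2) N
         / (pochhammer (\<mu> + 1) N * pochhammer (\<nu> + 1) N * pochhammer (\<mu> + \<nu> + 1) N * fact N)"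
proof -
  have s: "s \<notin> \<int>\<^sub>\<le>\<^sub>0"
    using notin_nonpos_Ints_of_double(1) \<mu>\<nu> two_s by metis
  define K where "K = pochhammer (1/2) N / (4 ^ N * pochhammer (s + 1) N)"
  have "(\<Sum>(L, m, n)\<in>{(L, m, n). 2 * L + m + n = N}. triple_coeff s \<mu> \<nu> L m n)
      = (\<Sum>i\<le>N. \<Sum>L\<le>min i (N - i). triple_coeff s \<mu> \<nu> L (i - L) (N - i - L))"
    by (simp add: sum_degree_fiber case_prod_beta)
  also have "\<dots> = K * (\<Sum>i\<le>N. 1 / (fact i * fact (N - i) * pochhammer (\<mu> + 1) i * pochhammer (\<nu> + 1) (N - i)))"
    unfolding sum_distrib_left
    by (rule sum.cong) (auto simp: sum_triple_coeff_diagonal[OF s \<mu> \<nu>, of _ "N - _", simplified] K_def)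
  also have "(\<Sum>i\<le>N. 1 / (fact i * fact (N - i) * pochhammer (\<mu> + 1) i * pochhammer (\<nu> + 1) (N - i)))
      = pochhammer (\<mu> + \<nu> + 1 + real N) N / (fact N * pochhammer (\<mu> + 1) N * pochhammer (\<nu> + 1) N)"
    using sum_inverse_pochhammer_Vandermonde[OF pochhammer_neq_0[OF \<mu>] pochhammer_neq_0[OF \<nu>]]
    by (simp add: algebra_simps)
  also have "pochhammer (\<mu> + \<nu> + 1 + real N) N
      = 4 ^ N * pochhammer (s + 1/2) N * pochhammer (s + 1) N / pochhammer (\<mu> + \<nu> + 1) N"
  proof -
    have args: "2 * (s + 1/2) = \<mu> + \<nu> + 1" "s + 1/2 + 1/2 = s + 1"
      using two_s by simp_all
    show ?thesis
      using pochhammer_double_shift[of "s + 1/2" N] notin_nonpos_Ints_add_of_nat[OF \<mu>\<nu>, of 1]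
      unfolding args by simp
  qed
  finally show ?thesis
    using pochhammer_neq_0[OF notin_nonpos_Ints_add_of_nat[OF s, of 1], of N]
      pochhammer_neq_0[OF \<mu>, of N] pochhammer_neq_0[OF \<nu>, of N]
    by (simp add: K_def field_simps)
qed

lemma abs_linear_div_le_four_power:
  fixes s :: real
  assumes "s \<noteq> 0"
  shows "\<bar>(2 * real L + s) / s\<bar> \<le> (\<bar>s\<bar> + 1) / \<bar>s\<bar> * 4 ^ L"
proof -
  have "2 * L + 1 \<le> 4 ^ L"
    using less_exp[of "2 * L"] by (simp add: power_mult)
  then have "real (2 * L + 1) \<le> real (4 ^ L)"
    by (simp only: of_nat_le_iff)
  then have "2 * real L + 1 \<le> 4 ^ L"
    by simp
  have "\<bar>2 * real L + s\<bar> \<le> 2 * real L + \<bar>s\<bar>"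
    using abs_triangle_ineq[of "2 * real L" s] by simp
  also have "\<dots> \<le> (\<bar>s\<bar> + 1) * (2 * real L + 1)"
    by (simp add: algebra_simps)
  also have "\<dots> \<le> (\<bar>s\<bar> + 1) * 4 ^ L"
    using \<open>2 * real L + 1 \<le> 4 ^ L\<close> by (intro mult_left_mono) auto
  finally show ?thesis
    using assms by (simp add: abs_divide field_simps)
qed

lemma abs_triple_coeff_le:
  assumes "s \<noteq> 0"
    and Cm: "Cm > 0" "\<And>k. \<bar>pochhammer (1/2) k / pochhammer (\<mu> + 1) k\<bar> \<le> 3 ^ k / Cm"
    and Cn: "Cn > 0" "\<And>k. \<bar>pochhammer (1/2) k / pochhammer (\<nu> + 1) k\<bar> \<le> 3 ^ k / Cn"
    and Cs: "Cs > 0" "\<And>k l. \<bar>1 / pochhammer (s + 1) (k + l)\<bar> \<le> 2 ^ (k + l) / (Cs * fact k)"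
  defines E_def: "E \<equiv> (\<bar>2 * s\<bar> + 1) ^ 2" and D_def: "D \<equiv> (\<bar>s\<bar> + 1) / \<bar>s\<bar>"
  shows "\<bar>triple_coeff s \<mu> \<nu> L m n\<bar> \<le> D / (Cm * Cn * Cs * Cs) * ((36 * E) ^ L / fact L)
      * ((3/2) ^ m / fact m) * ((3/2) ^ n / fact n)"
proof -
  have bound_2s: "\<bar>pochhammer (2 * s) (2 * L) / fact (2 * L)\<bar> \<le> E ^ L"
    using abs_pochhammer_le[of "2 * s" "2 * L"] by (simp add: E_def abs_divide power_mult divide_le_eq)
  have bound_linear: "\<bar>(2 * real L + s) / s\<bar> \<le> D * 4 ^ L"
    using abs_linear_div_le_four_power[OF \<open>s \<noteq> 0\<close>] by (simp add: D_def)
  have bound_m: "\<bar>1 / pochhammer (s + 1) (2 * L + m)\<bar> \<le> 4 ^ L * 2 ^ m / (Cs * fact L)"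
  proof -
    have "2 * L + m = L + (L + m)"
      by simp
    moreover have "(4::real) ^ L = 2 ^ L * 2 ^ L"
      by (simp flip: power_mult_distrib)
    ultimately show ?thesis
      using Cs(2)[of L "L + m"] by (simp only:) (simp add: power_add mult_ac)
  qed
  have bound_n: "\<bar>1 / pochhammer (s + 1) (2 * L + n)\<bar> \<le> 4 ^ L * 2 ^ n / Cs"
    using Cs(2)[of 0 "2 * L + n"] by (simp add: power_add power_mult)
  have "\<bar>triple_coeff s \<mu> \<nu> L m n\<bar>
    = \<bar>pochhammer (2 * s) (2 * L) / fact (2 * L)\<bar> * \<bar>(2 * real L + s) / s\<bar>
      * \<bar>pochhammer (1/2) (L + m) / pochhammer (\<mu> + 1) (L + m)\<bar>
      * \<bar>pochhammer (1/2) (L + n) / pochhammer (\<nu> + 1) (L + n)\<bar>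
      * \<bar>1 / pochhammer (s + 1) (2 * L + m)\<bar> * \<bar>1 / pochhammer (s + 1) (2 * L + n)\<bar>
      * (1 / (4 ^ (2 * L + m + n) * fact m * fact n))"
    unfolding triple_coeff_def by (simp add: abs_mult abs_divide)
  also have "\<dots> \<le> E ^ L * (D * 4 ^ L) * (3 ^ (L + m) / Cm) * (3 ^ (L + n) / Cn)
      * (4 ^ L * 2 ^ m / (Cs * fact L)) * (4 ^ L * 2 ^ n / Cs) * (1 / (4 ^ (2 * L + m + n) * fact m * fact n))"
    using Cm(1) Cn(1) Cs(1)
    by (intro mult_mono bound_2s bound_linear bound_m bound_n Cm(2) Cn(2) order_refl) (auto simp: D_def E_def)
  also have "\<dots> = D / (Cm * Cn * Cs * Cs) * ((36 * E) ^ L / fact L)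
    * ((3/2) ^ m / fact m) * ((3/2) ^ n / fact n)"
  proof -
    have "(4::real) ^ (2 * L + m + n) = 4 ^ L * 4 ^ L * 4 ^ m * 4 ^ n"
      by (simp add: power_add mult_2)
    moreover have "(4::real) ^ L = 2 ^ L * 2 ^ L" "(4::real) ^ m = 2 ^ m * 2 ^ m" "(4::real) ^ n = 2 ^ n * 2 ^ n"
      "(36::real) ^ L = 2 ^ L * 2 ^ L * 3 ^ L * 3 ^ L"
      by (simp_all flip: power_mult_distrib)
    ultimately show ?thesis
      using Cm(1) Cn(1) Cs(1) by (simp add: power_add power_mult_distrib power_divide field_simps)
  qed
  finally show ?thesis .
qed

lemma triple_coeff_bound:
  assumes s: "s \<notin> \<int>\<^sub>\<le>\<^sub>0" and \<mu>: "\<mu> + 1 \<notin> \<int>\<^sub>\<le>\<^sub>0" and \<nu>: "\<nu> + 1 \<notin> \<int>\<^sub>\<le>\<^sub>0"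
  obtains K A B where
    "\<And>L m n. \<bar>triple_coeff s \<mu> \<nu> L m n\<bar> \<le> K * (A ^ L / fact L) * (B ^ m / fact m) * (B ^ n / fact n)"
proof -
  obtain Cm where Cm: "Cm > 0" "\<And>k. \<bar>pochhammer (1/2) k / pochhammer (\<mu> + 1) k\<bar> \<le> 3 ^ k / Cm"
    using abs_pochhammer_ratio_bound[OF \<mu>, of "1/2"] by auto
  obtain Cn where Cn: "Cn > 0" "\<And>k. \<bar>pochhammer (1/2) k / pochhammer (\<nu> + 1) k\<bar> \<le> 3 ^ k / Cn"
    using abs_pochhammer_ratio_bound[OF \<nu>, of "1/2"] by auto
  obtain Cs where Cs: "Cs > 0" "\<And>k l. \<bar>1 / pochhammer (s + 1) (k + l)\<bar> \<le> 2 ^ (k + l) / (Cs * fact k)"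
    using abs_inverse_pochhammer_bound notin_nonpos_Ints_add_of_nat[OF s, of 1] by auto
  have "s \<noteq> 0"
    using s by auto
  from abs_triple_coeff_le[OF this Cm Cn Cs] show ?thesis
    by (rule that)
qed

lemma triple_series_summable:
  assumes s: "s \<notin> \<int>\<^sub>\<le>\<^sub>0" and \<mu>: "\<mu> + 1 \<notin> \<int>\<^sub>\<le>\<^sub>0" and \<nu>: "\<nu> + 1 \<notin> \<int>\<^sub>\<le>\<^sub>0"
  shows "(\<lambda>(L, m, n). triple_coeff s \<mu> \<nu> L m n * x ^ (2 * L + m + n)) summable_on UNIV"
proof -
  obtain K A B where bound:
    "\<And>L m n. \<bar>triple_coeff s \<mu> \<nu> L m n\<bar> \<le> K * (A ^ L / fact L) * (B ^ m / fact m) * (B ^ n / fact n)"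
    using triple_coeff_bound[OF s \<mu> \<nu>] by blast
  define e where "e c = (\<lambda>k::nat. c ^ k / fact k)" for c :: real
  have exp_series: "(e c has_sum exp c) UNIV" for c
    unfolding e_def by (rule has_sum_exp_series)
  define d where "d = (\<lambda>(L, m, n). K * e (A * x\<^sup>2) L * (e (B * \<bar>x\<bar>) m * e (B * \<bar>x\<bar>) n))"
  have "((\<lambda>L. K * e (A * x\<^sup>2) L) has_sum K * exp (A * x\<^sup>2)) UNIV"
    by (rule has_sum_cmult_right[OF exp_series])
  moreover have "((\<lambda>(m, n). e (B * \<bar>x\<bar>) m * e (B * \<bar>x\<bar>) n) has_sum exp (B * \<bar>x\<bar>) * exp (B * \<bar>x\<bar>)) UNIV"
    using has_sum_mult_product[OF exp_series exp_series] by simp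
  ultimately have "((\<lambda>(L, q). K * e (A * x\<^sup>2) L * (\<lambda>(m, n). e (B * \<bar>x\<bar>) m * e (B * \<bar>x\<bar>) n) q)
      has_sum K * exp (A * x\<^sup>2) * (exp (B * \<bar>x\<bar>) * exp (B * \<bar>x\<bar>))) (UNIV \<times> UNIV)"
    by (rule has_sum_mult_product)
  then have "d summable_on UNIV"
    unfolding d_def by (auto simp: case_prod_unfold dest: has_sum_imp_summable)
  then have "(\<lambda>p. norm (d p)) summable_on UNIV"
    using summable_on_iff_abs_summable_on_real by blast
  define t where "t = (\<lambda>(L, m, n). triple_coeff s \<mu> \<nu> L m n * x ^ (2 * L + m + n))"
  have "norm (t p) \<le> norm (d p)" for p
  proof -
    obtain L m n where p: "p = (L, m, n)"
      by (cases p) auto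
    have "\<bar>triple_coeff s \<mu> \<nu> L m n * x ^ (2 * L + m + n)\<bar>
        \<le> K * (A ^ L / fact L) * (B ^ m / fact m) * (B ^ n / fact n) * \<bar>x\<bar> ^ (2 * L + m + n)"
      unfolding abs_mult power_abs by (rule mult_right_mono[OF bound]) simp
    also have "\<dots> = d p"
    proof -
      have "\<bar>x\<bar> ^ (2 * L) = (x\<^sup>2) ^ L"
        by (simp add: power_mult)
      then show ?thesis
        by (simp add: p d_def e_def power_add power_mult_distrib mult_ac)
    qed
    finally show ?thesis
      by (simp add: p t_def)
  qed
  with \<open>(\<lambda>p. norm (d p)) summable_on UNIV\<close> have "(\<lambda>p. norm (t p)) summable_on UNIV"
    by (rule summable_on_comparison_test) simp
  then show ?thesis
    unfolding t_def[symmetric] by (rule abs_summable_summable)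
qed

text \<open>The \<open>L\<close>-th coefficient of the right-hand side once its Gamma factors are simplified.\<close>

definition outer_coeff :: "real \<Rightarrow> real \<Rightarrow> real \<Rightarrow> nat \<Rightarrow> real" where
  "outer_coeff s \<mu> \<nu> L =
     s * pochhammer (2 * s) (2 * L) * pochhammer (1/2) L ^ 2
     / (16 ^ L * fact (2 * L) * pochhammer (\<mu> + 1) L * pochhammer (\<nu> + 1) L
        * (2 * real L + s) * pochhammer s (2 * L) ^ 2)"

lemma triple_coeff_factor:
  assumes s: "s \<notin> \<int>\<^sub>\<le>\<^sub>0" and \<mu>: "\<mu> + 1 \<notin> \<int>\<^sub>\<le>\<^sub>0" and \<nu>: "\<nu> + 1 \<notin> \<int>\<^sub>\<le>\<^sub>0"
  shows "triple_coeff s \<mu> \<nu> L m n * x ^ (2 * L + m + n)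
       = outer_coeff s \<mu> \<nu> L * x ^ (2 * L)
         * hypergeom_term [real L + 1/2] [real L + \<mu> + 1, 2 * real L + s + 1] (x / 4) m
         * hypergeom_term [real L + 1/2] [2 * real L + s + 1, real L + \<nu> + 1] (x / 4) n"
proof -
  have "s \<noteq> 0" "2 * real L + s \<noteq> 0"
    using s plus_of_nat_eq_0_imp[of s "2 * L"] by (auto simp: add.commute)
  have split_s: "pochhammer (s + 1) (2 * L + k)
      = pochhammer s (2 * L) * (2 * real L + s) / s * pochhammer (2 * real L + s + 1) k" for k
  proof -
    have "s * pochhammer (s + 1) (2 * L + k) = pochhammer s (2 * L + Suc k)"
      by (simp only: pochhammer_rec add_Suc_right)
    also have "\<dots> = pochhammer s (2 * L) * pochhammer (s + real (2 * L)) (Suc k)"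
      by (rule pochhammer_product')
    also have "pochhammer (s + real (2 * L)) (Suc k) = (2 * real L + s) * pochhammer (2 * real L + s + 1) k"
      by (simp add: pochhammer_rec algebra_simps)
    finally show ?thesis
      using \<open>s \<noteq> 0\<close> by (simp add: field_simps)
  qed
  \<comment> \<open>\<open>q\<close> is kept opaque so that \<open>field_simps\<close> cancels it rather than multiplying it out.\<close>
  define q where "q = 2 * real L + s"
  have split: "pochhammer (1/2) (L + k) = pochhammer (1/2) L * pochhammer (real L + 1/2) k"
    "pochhammer (\<mu> + 1) (L + k) = pochhammer (\<mu> + 1) L * pochhammer (real L + \<mu> + 1) k"
    "pochhammer (\<nu> + 1) (L + k) = pochhammer (\<nu> + 1) L * pochhammer (real L + \<nu> + 1) k" for k
    unfolding pochhammer_product' by (simp_all add: algebra_simps)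
  moreover have "pochhammer s (2 * L) \<noteq> 0" "pochhammer (2 * real L + s + 1) k \<noteq> 0"
    "pochhammer (\<mu> + 1) (L + k) \<noteq> 0" "pochhammer (\<nu> + 1) (L + k) \<noteq> 0" "pochhammer (1/2 :: real) (L + k) \<noteq> 0" for k
    using s \<mu> \<nu> pochhammer_neq_0 notin_nonpos_Ints_add_of_nat[OF s, of "2 * L + 1"] half_notin_nonpos_Ints
    by (auto simp: add.commute add.left_commute)
  moreover have powers: "x ^ (2 * L + m + n) = x ^ (2 * L) * x ^ m * x ^ n"
    "(4::real) ^ (2 * L + m + n) = 16 ^ L * 4 ^ m * 4 ^ n"
    by (simp_all add: power_add power_mult)
  ultimately show ?thesis
    using \<open>s \<noteq> 0\<close> \<open>2 * real L + s \<noteq> 0\<close>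
    unfolding triple_coeff_def outer_coeff_def hypergeom_term_def split_s split powers q_def[symmetric]
    by (simp add: field_simps power2_eq_square power_divide)
qed

lemma triple_series_inner_has_sum:
  assumes s: "s \<notin> \<int>\<^sub>\<le>\<^sub>0" and \<mu>: "\<mu> + 1 \<notin> \<int>\<^sub>\<le>\<^sub>0" and \<nu>: "\<nu> + 1 \<notin> \<int>\<^sub>\<le>\<^sub>0"
  shows "((\<lambda>(m, n). triple_coeff s \<mu> \<nu> L m n * x ^ (2 * L + m + n))
    has_sum outer_coeff s \<mu> \<nu> L * x ^ (2 * L)
      * hypergeomF [real L + 1/2] [real L + \<mu> + 1, 2 * real L + s + 1] (x / 4)
      * hypergeomF [real L + 1/2] [2 * real L + s + 1, real L + \<nu> + 1] (x / 4)) UNIV"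
proof -
  have "real L + \<mu> + 1 \<notin> \<int>\<^sub>\<le>\<^sub>0" "real L + \<nu> + 1 \<notin> \<int>\<^sub>\<le>\<^sub>0" "2 * real L + s + 1 \<notin> \<int>\<^sub>\<le>\<^sub>0"
    using notin_nonpos_Ints_add_of_nat[OF \<mu>, of L] notin_nonpos_Ints_add_of_nat[OF \<nu>, of L]
      notin_nonpos_Ints_add_of_nat[OF s, of "2 * L + 1"]
    by (simp_all add: add_ac)
  then have "(hypergeom_term [real L + 1/2] [real L + \<mu> + 1, 2 * real L + s + 1] (x / 4)
        has_sum hypergeomF [real L + 1/2] [real L + \<mu> + 1, 2 * real L + s + 1] (x / 4)) UNIV"
      "(hypergeom_term [real L + 1/2] [2 * real L + s + 1, real L + \<nu> + 1] (x / 4)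
        has_sum hypergeomF [real L + 1/2] [2 * real L + s + 1, real L + \<nu> + 1] (x / 4)) UNIV"
    by (auto intro: hypergeomF_has_sum)
  from has_sum_cmult_right[OF has_sum_mult_product[OF this], of "outer_coeff s \<mu> \<nu> L * x ^ (2 * L)"]
  show ?thesis
    by (simp add: triple_coeff_factor[OF s \<mu> \<nu>] case_prod_unfold mult.assoc)
qed

lemma hypergeom_2F3_sums_products:
  assumes \<mu>: "\<mu> + 1 \<notin> \<int>\<^sub>\<le>\<^sub>0" and \<nu>: "\<nu> + 1 \<notin> \<int>\<^sub>\<le>\<^sub>0" and \<mu>\<nu>: "\<mu> + \<nu> \<notin> \<int>\<^sub>\<le>\<^sub>0"
    and two_s: "\<mu> + \<nu> = 2 * s"
  shows "(\<lambda>L. outer_coeff s \<mu> \<nu> L * x ^ (2 * L)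
      * hypergeomF [real L + 1/2] [real L + \<mu> + 1, 2 * real L + s + 1] (x / 4)
      * hypergeomF [real L + 1/2] [2 * real L + s + 1, real L + \<nu> + 1] (x / 4))
    sums hypergeomF [1/2, s + 1/2] [\<mu> + 1, \<nu> + 1, \<mu> + \<nu> + 1] x"
proof -
  have s: "s \<notin> \<int>\<^sub>\<le>\<^sub>0"
    using notin_nonpos_Ints_of_double(1) \<mu>\<nu> two_s by metis
  define g where "g = (\<lambda>(L, m, n). triple_coeff s \<mu> \<nu> L m n * x ^ (2 * L + m + n))"
  have "g summable_on UNIV"
    unfolding g_def by (rule triple_series_summable[OF s \<mu> \<nu>])
  moreover have "((\<lambda>q. g (L, q)) has_sum outer_coeff s \<mu> \<nu> L * x ^ (2 * L)
      * hypergeomF [real L + 1/2] [real L + \<mu> + 1, 2 * real L + s + 1] (x / 4)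
      * hypergeomF [real L + 1/2] [2 * real L + s + 1, real L + \<nu> + 1] (x / 4)) UNIV" for L
    using triple_series_inner_has_sum[OF s \<mu> \<nu>] by (simp add: g_def case_prod_unfold)
  ultimately have by_L: "(\<lambda>L. outer_coeff s \<mu> \<nu> L * x ^ (2 * L)
      * hypergeomF [real L + 1/2] [real L + \<mu> + 1, 2 * real L + s + 1] (x / 4)
      * hypergeomF [real L + 1/2] [2 * real L + s + 1, real L + \<nu> + 1] (x / 4)) sums infsum g UNIV"
    and by_degree: "(\<lambda>N. \<Sum>p\<in>{(L, m, n). 2 * L + m + n = N}. g p) sums infsum g UNIV"
    by (rule sums_regroup_by_degree)+
  have "(\<Sum>p\<in>{(L, m, n). 2 * L + m + n = N}. g p)
      = (\<Sum>(L, m, n)\<in>{(L, m, n). 2 * L + m + n = N}. triple_coeff s \<mu> \<nu> L m n) * x ^ N" for N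
    unfolding sum_distrib_right by (rule sum.cong) (auto simp: g_def)
  also have "\<dots> N = hypergeom_term [1/2, s + 1/2] [\<mu> + 1, \<nu> + 1, \<mu> + \<nu> + 1] x N" for N
    unfolding sum_triple_coeff_fiber[OF \<mu> \<nu> \<mu>\<nu> two_s] hypergeom_term_def by (simp add: mult_ac)
  finally have "hypergeom_term [1/2, s + 1/2] [\<mu> + 1, \<nu> + 1, \<mu> + \<nu> + 1] x sums infsum g UNIV"
    using by_degree by simp
  then have "hypergeomF [1/2, s + 1/2] [\<mu> + 1, \<nu> + 1, \<mu> + \<nu> + 1] x = infsum g UNIV"
    unfolding hypergeomF_eq_suminf by (rule sums_unique[symmetric])
  with by_L show ?thesis
    by simp
qed

section \<open>The Gamma prefactor\<close>

lemma Gamma_legendre_duplication_real: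
  fixes z :: real
  assumes "z \<notin> \<int>\<^sub>\<le>\<^sub>0" "z + 1/2 \<notin> \<int>\<^sub>\<le>\<^sub>0"
  shows "Gamma z * Gamma (z + 1/2) = 2 powr (1 - 2 * z) * sqrt pi * Gamma (2 * z)"
proof -
  have half: "complex_of_real z + 1/2 = complex_of_real (z + 1/2)"
    by simp
  have "complex_of_real (Gamma z * Gamma (z + 1/2)) = Gamma (of_real z) * Gamma (of_real z + 1/2)"
    unfolding half by (simp only: of_real_mult Gamma_complex_of_real)
  also have "\<dots> = exp ((1 - 2 * of_real z) * of_real (ln 2)) * of_real (sqrt pi) * Gamma (2 * of_real z)"
    by (rule Gamma_legendre_duplication) (use assms in \<open>simp_all only: half of_real_in_nonpos_Ints_iff not_False_eq_True\<close>)
  also have "(1 - 2 * complex_of_real z) * of_real (ln 2) = of_real ((1 - 2 * z) * ln 2)"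
    by simp
  also have "2 * complex_of_real z = of_real (2 * z)"
    by simp
  also have "exp (complex_of_real ((1 - 2 * z) * ln 2)) * of_real (sqrt pi) * Gamma (complex_of_real (2 * z))
      = complex_of_real (exp ((1 - 2 * z) * ln 2) * sqrt pi * Gamma (2 * z))"
    by (simp only: exp_of_real Gamma_complex_of_real) (simp only: of_real_mult)
  finally show ?thesis
    by (simp only: of_real_eq_iff powr_def) simp
qed

lemma gpoch_half:
  fixes a :: real
  assumes "a + 1 \<notin> \<int>\<^sub>\<le>\<^sub>0"
  shows "gpoch (real L + 1/2) (a + 1/2) = Gamma (a + 1) * pochhammer (a + 1) L / (sqrt pi * pochhammer (1/2) L)"
proof -
  have "Gamma (a + 1 + real L) = Gamma (a + 1) * pochhammer (a + 1) L"
    using pochhammer_Gamma[OF assms, of L] assms by (simp add: Gamma_eq_zero_iff field_simps)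
  then have num: "Gamma (real L + 1/2 + (a + 1/2)) = Gamma (a + 1) * pochhammer (a + 1) L"
    by (simp add: add_ac)
  have "Gamma (1/2 + real L) = sqrt pi * pochhammer (1/2) L"
    using pochhammer_Gamma[OF half_notin_nonpos_Ints, of L] by (simp add: Gamma_one_half_real field_simps)
  then have den: "Gamma (real L + 1/2) = sqrt pi * pochhammer (1/2) L"
    by (simp add: add.commute)
  show ?thesis
    unfolding gpoch_def num den ..
qed

lemma powr_two_exponent:
  fixes \<mu> \<nu> s :: real
  assumes "\<mu> + \<nu> = 2 * s"
  shows "2 powr (4 * real L - 2 * s - \<mu> - \<nu> + 1) = 2 * 16 ^ L / (2 powr (\<mu> + \<nu>)) ^ 2"
proof -
  have "2 powr (4 * real L - 2 * s - \<mu> - \<nu> + 1) * (2 powr (\<mu> + \<nu>)) ^ 2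
      = 2 powr (4 * real L - 2 * s - \<mu> - \<nu> + 1 + ((\<mu> + \<nu>) + (\<mu> + \<nu>)))"
    by (simp only: power2_eq_square powr_add)
  also have "4 * real L - 2 * s - \<mu> - \<nu> + 1 + ((\<mu> + \<nu>) + (\<mu> + \<nu>)) = real (4 * L + 1)"
    using assms by simp
  also have "(2::real) powr real (4 * L + 1) = 2 ^ (4 * L + 1)"
    by (rule powr_realpow) simp
  also have "(2::real) ^ (4 * L + 1) = 2 * 16 ^ L"
    by (simp add: power_add power_mult)
  finally show ?thesis
    by (simp add: field_simps)
qed

lemma Gamma_shift_double:
  fixes \<mu> \<nu> s :: real
  assumes \<mu>\<nu>: "\<mu> + \<nu> \<notin> \<int>\<^sub>\<le>\<^sub>0" and two_s: "\<mu> + \<nu> = 2 * s"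
  shows "Gamma (2 * real L + \<mu> + \<nu>)
       = 2 powr (\<mu> + \<nu>) * Gamma s * Gamma (s + 1/2) * pochhammer (\<mu> + \<nu>) (2 * L) / (2 * sqrt pi)"
proof -
  have "Gamma (2 * real L + \<mu> + \<nu>) = Gamma (\<mu> + \<nu>) * pochhammer (\<mu> + \<nu>) (2 * L)"
    using pochhammer_Gamma[OF \<mu>\<nu>, of "2 * L"] \<mu>\<nu> by (simp add: Gamma_eq_zero_iff field_simps add_ac)
  moreover have "Gamma (\<mu> + \<nu>) = 2 powr (\<mu> + \<nu>) * Gamma s * Gamma (s + 1/2) / (2 * sqrt pi)"
  proof -
    have "Gamma s * Gamma (s + 1/2) = 2 powr (1 - 2 * s) * sqrt pi * Gamma (\<mu> + \<nu>)"
      using Gamma_legendre_duplication_real notin_nonpos_Ints_of_double \<mu>\<nu> unfolding two_s by blast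
    then have "2 powr (\<mu> + \<nu>) * (Gamma s * Gamma (s + 1/2))
        = (2 powr (1 - 2 * s) * 2 powr (\<mu> + \<nu>)) * sqrt pi * Gamma (\<mu> + \<nu>)"
      by (simp only: mult_ac)
    also have "2 powr (1 - 2 * s) * 2 powr (\<mu> + \<nu>) = 2"
      unfolding two_s by (simp flip: powr_add)
    finally show ?thesis
      by (simp add: field_simps)
  qed
  ultimately show ?thesis
    by (simp add: field_simps)
qed

lemma prefactor_times_coefficient:
  fixes \<mu> \<nu> :: real
  assumes \<mu>: "\<mu> + 1 \<notin> \<int>\<^sub>\<le>\<^sub>0" and \<nu>: "\<nu> + 1 \<notin> \<int>\<^sub>\<le>\<^sub>0" and \<mu>\<nu>: "\<mu> + \<nu> \<notin> \<int>\<^sub>\<le>\<^sub>0"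
  shows "(2 powr (\<mu> + \<nu>) * Gamma (\<mu> + 1) * Gamma (\<nu> + 1) * Gamma (\<mu>/2 + \<nu>/2 + 1))
      / (sqrt pi * Gamma (\<mu>/2 + \<nu>/2) ^ 2 * Gamma (\<mu>/2 + \<nu>/2 + 1/2))
    * ((y * 2 powr (4 * real L - 2 * (\<mu>/2 + \<nu>/2) - \<mu> - \<nu> + 1) * (pochhammer (\<mu>/2 + \<nu>/2 + 1/2) (2 * L)) ^ 2
        * Gamma (2 * real L + \<mu> + \<nu>))
      / (fact (2 * L) * gpoch (real L + 1/2) (\<mu> + 1/2) * gpoch (real L + 1/2) (\<nu> + 1/2)
        * (2 * real L + \<mu>/2 + \<nu>/2) * (pochhammer (\<mu> + \<nu>) (2 * L)) ^ 2
        * (pochhammer (2 * real L + \<mu> + \<nu>) (2 * L)) ^ 2))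
    = y * outer_coeff (\<mu>/2 + \<nu>/2) \<mu> \<nu> L"
proof -
  define s where "s = \<mu>/2 + \<nu>/2"
  have two_s: "\<mu> + \<nu> = 2 * s"
    by (simp add: s_def)
  have s: "s \<notin> \<int>\<^sub>\<le>\<^sub>0" "s + 1/2 \<notin> \<int>\<^sub>\<le>\<^sub>0"
    using notin_nonpos_Ints_of_double \<mu>\<nu> unfolding two_s by blast+
  define E where "E = (2::real) powr (\<mu> + \<nu>)"
  have "E > 0"
    by (simp add: E_def)
  have power_two: "2 powr (4 * real L - 2 * s - \<mu> - \<nu> + 1) = 2 * 16 ^ L / E ^ 2"
    unfolding E_def by (rule powr_two_exponent[OF two_s])
  have Gamma_shift: "Gamma (2 * real L + \<mu> + \<nu>) = E * Gamma s * Gamma (s + 1/2) * pochhammer (\<mu> + \<nu>) (2 * L) / (2 * sqrt pi)"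
    unfolding E_def by (rule Gamma_shift_double[OF \<mu>\<nu> two_s])
  have "2 * real L + \<mu> + \<nu> = 2 * s + of_nat (2 * L)" "(4::real) ^ (2 * L) = 16 ^ L"
    using two_s by (simp_all add: power_mult)
  then have poch_shift: "pochhammer (2 * real L + \<mu> + \<nu>) (2 * L)
      = 16 ^ L * pochhammer s (2 * L) * pochhammer (s + 1/2) (2 * L) / pochhammer (\<mu> + \<nu>) (2 * L)"
    using pochhammer_double_shift[OF \<mu>\<nu>[unfolded two_s], of "2 * L"] unfolding two_s by (simp only:)
  define q where "q = 2 * real L + s"
  have "Gamma s \<noteq> 0" "Gamma (s + 1/2) \<noteq> 0" "Gamma (\<mu> + 1) \<noteq> 0" "Gamma (\<nu> + 1) \<noteq> 0"
    using s \<mu> \<nu> by (simp_all add: Gamma_eq_zero_iff)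
  moreover have "pochhammer (\<mu> + \<nu>) (2 * L) \<noteq> 0" "pochhammer s (2 * L) \<noteq> 0"
    "pochhammer (s + 1/2) (2 * L) \<noteq> 0" "pochhammer (\<mu> + 1) L \<noteq> 0" "pochhammer (\<nu> + 1) L \<noteq> 0"
    "pochhammer (1/2 :: real) L \<noteq> 0"
    using \<mu>\<nu> s \<mu> \<nu> half_notin_nonpos_Ints by (simp_all add: pochhammer_neq_0)
  moreover have "2 * real L + s \<noteq> 0"
    using s(1) plus_of_nat_eq_0_imp[of s "2 * L"] by (auto simp: add.commute)
  moreover have "Gamma (s + 1) = s * Gamma s"
    using Gamma_plus1[OF s(1)] .
  moreover have forms: "2 * real L + \<mu>/2 + \<nu>/2 = 2 * real L + s" "\<mu>/2 + \<nu>/2 = s"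
    by (simp_all add: s_def)
  ultimately show ?thesis
    unfolding forms power_two Gamma_shift poch_shift gpoch_half[OF \<mu>] gpoch_half[OF \<nu>]
      outer_coeff_def E_def[symmetric]
    unfolding two_s[symmetric] q_def[symmetric]
    using \<open>E > 0\<close> by (simp add: field_simps power2_eq_square)
qed

lemma Gamma_prefactor_neq_0:
  fixes \<mu> \<nu> :: real
  assumes "\<mu> + 1 \<notin> \<int>\<^sub>\<le>\<^sub>0" and "\<nu> + 1 \<notin> \<int>\<^sub>\<le>\<^sub>0" and "\<mu> + \<nu> \<notin> \<int>\<^sub>\<le>\<^sub>0"
  shows "(2 powr (\<mu> + \<nu>) * Gamma (\<mu> + 1) * Gamma (\<nu> + 1) * Gamma (\<mu>/2 + \<nu>/2 + 1))
      / (sqrt pi * Gamma (\<mu>/2 + \<nu>/2) ^ 2 * Gamma (\<mu>/2 + \<nu>/2 + 1/2)) \<noteq> 0"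
proof -
  have "\<mu> + \<nu> = 2 * (\<mu>/2 + \<nu>/2)"
    by simp
  then have "\<mu>/2 + \<nu>/2 \<notin> \<int>\<^sub>\<le>\<^sub>0" "\<mu>/2 + \<nu>/2 + 1/2 \<notin> \<int>\<^sub>\<le>\<^sub>0"
    using notin_nonpos_Ints_of_double assms(3) by metis+
  then show ?thesis
    using assms notin_nonpos_Ints_add_of_nat[of "\<mu>/2 + \<nu>/2" 1] by (simp add: Gamma_eq_zero_iff)
qed

theorem mainTheorem7:
  fixes k \<mu> \<nu> :: real
  assumes "\<mu> + 1 \<notin> \<int>\<^sub>\<le>\<^sub>0" and "\<nu> + 1 \<notin> \<int>\<^sub>\<le>\<^sub>0" and "\<mu> + \<nu> \<notin> \<int>\<^sub>\<le>\<^sub>0"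
  shows "hypergeomF [1/2, \<mu>/2 + \<nu>/2 + 1/2] [\<mu> + 1, \<nu> + 1, \<mu> + \<nu> + 1] (- (k ^ 2)) =
    (2 powr (\<mu> + \<nu>) * Gamma (\<mu> + 1) * Gamma (\<nu> + 1) * Gamma (\<mu>/2 + \<nu>/2 + 1))
      / (sqrt pi * Gamma (\<mu>/2 + \<nu>/2) ^ 2 * Gamma (\<mu>/2 + \<nu>/2 + 1/2))
    * (\<Sum>L. ((-1) ^ (2 * L) * k ^ (4 * L)
              * 2 powr (4 * real L - 2 * (\<mu>/2 + \<nu>/2) - \<mu> - \<nu> + 1)
              * (pochhammer (\<mu>/2 + \<nu>/2 + 1/2) (2 * L)) ^ 2
              * Gamma (2 * real L + \<mu> + \<nu>))
           / (fact (2 * L) * gpoch (real L + 1/2) (\<mu> + 1/2) * gpoch (real L + 1/2) (\<nu> + 1/2)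
              * (2 * real L + \<mu>/2 + \<nu>/2) * (pochhammer (\<mu> + \<nu>) (2 * L)) ^ 2
              * (pochhammer (2 * real L + \<mu> + \<nu>) (2 * L)) ^ 2)
           * hypergeomF [real L + 1/2] [real L + \<mu> + 1, 2 * real L + \<mu>/2 + \<nu>/2 + 1] (- (k ^ 2) / 4)
           * hypergeomF [real L + 1/2] [2 * real L + \<mu>/2 + \<nu>/2 + 1, real L + \<nu> + 1] (- (k ^ 2) / 4))"
  (is "?F = ?P * (\<Sum>L. ?T L)")
proof -
  define s x where "s = \<mu>/2 + \<nu>/2" and "x = - (k ^ 2)"
  have two_s: "\<mu> + \<nu> = 2 * s"
    by (simp add: s_def)
  have "?P * ?T L = outer_coeff s \<mu> \<nu> L * x ^ (2 * L)
      * hypergeomF [real L + 1/2] [real L + \<mu> + 1, 2 * real L + s + 1] (x / 4)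
      * hypergeomF [real L + 1/2] [2 * real L + s + 1, real L + \<nu> + 1] (x / 4)" for L
  proof -
    have "(-1) ^ (2 * L) * k ^ (4 * L) * outer_coeff s \<mu> \<nu> L = outer_coeff s \<mu> \<nu> L * x ^ (2 * L)"
      by (simp add: x_def power_mult flip: power_mult_distrib)
    moreover have "2 * real L + \<mu>/2 + \<nu>/2 + 1 = 2 * real L + s + 1" "- (k ^ 2) / 4 = x / 4"
      by (simp_all add: s_def x_def)
    ultimately show ?thesis
      using prefactor_times_coefficient[OF assms, of "(-1) ^ (2 * L) * k ^ (4 * L)" L]
      unfolding s_def[symmetric] by (simp only: mult.assoc[symmetric])
  qed
  then have "(\<lambda>L. ?P * ?T L) sums ?F"
    using hypergeom_2F3_sums_products[OF assms two_s, of x] unfolding s_def x_def by simp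
  then have "?T sums (?F / ?P)"
    using Gamma_prefactor_neq_0[OF assms] by (rule sums_mult_D)
  then have "(\<Sum>L. ?T L) = ?F / ?P"
    by (rule sums_unique[symmetric])
  with Gamma_prefactor_neq_0[OF assms] show ?thesis
    by simp
qed

end
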